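(* Let $f:\mathbf U\to\mathbf V$ be a map in the set-up, with the layered decomposition $\mathcal D(f)=\bigcup_k\mathcal D_k(f)$ of equivalence classes of critical points described in the context. Then for every $k\ge1$, every $[c]\in\mathcal D_k(f)$ accumulates to some element of $\mathcal D_0(f)$.
   Context: A map in the set-up: $\mathbf V$ is a disjoint union of finitely many Jordan domains in $\mathbb C$ with pairwise disjoint quasicircle boundaries; $\mathbf U$ is compactly contained in $\mathbf V$ and is a union of finitely many Jordan domains with pairwise disjoint closures; $f:\mathbf U\to\mathbf V$ is a proper holomorphic map all of whose critical points (set $\mathrm{Crit}(f)$) lie in $\mathcal K_f:=\{z\in\mathbf U: f^n(z)\in\mathbf U\ \forall n\ge0\}$, and each component of $\mathbf V$ contains at most one component of $\mathcal K_f$ containing critical points. Puzzle pieces of depth $n$ are components of $f^{-n}(\mathbf V)$; $P_n(x)$ is the depth-$n$ piece containing $x\in\mathcal K_f$. For $x,y\in\mathcal K_f$, $x\to y$ means: for every $n\ge0$ there is $j\ge1$ with $f^j(x)\in P_n(y)$. On $\mathrm{Crit}(f)$: $c_1\sim c_2$ iff $c_1=c_2$ or ($c_1\to c_2$ and $c_2\to c_1$); $\mathcal D(f)=\mathrm{Crit}(f)/\sim$. $[c_1]\to[c_2]$ iff there exist $c_1'\in[c_1]$, $c_2'\in[c_2]$ with $c_1'\to c_2'$. Partial order: $[c_1]\le[c_2]$ iff $[c_1]=[c_2]$ or $[c_2]\to[c_1]$. $\mathcal D_0(f)$ is the set of $[c]$ that do not accumulate to any element of $\mathcal D(f)\setminus\{[c]\}$;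 inductively $\mathcal D_{k+1}(f)$ is the set of $\le$-minimal elements of $\mathcal D(f)\setminus(\mathcal D_0(f)\cup\dots\cup\mathcal D_k(f))$. *)

theory Defs
  imports "HOL-Analysis.Analysis"
begin

definition jordan_domain :: "complex set \<Rightarrow> bool" where
  "jordan_domain D \<longleftrightarrow>
     (\<exists>g. simple_path g \<and> pathfinish g = pathstart g \<and> D = inside (path_image g))"

definition qc_dilatation :: "(complex \<Rightarrow> complex) \<Rightarrow> complex \<Rightarrow> real \<Rightarrow> real" where
  "qc_dilatation h z r =
     (SUP w\<in>sphere z r. cmod (h w - h z)) / (INF w\<in>sphere z r. cmod (h w - h z))"

definition quasiconformal :: "(complex \<Rightarrow> complex) \<Rightarrow> bool" where
  "quasiconformal h \<longleftrightarrow>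
     (\<exists>h'. homeomorphism UNIV UNIV h h') \<and>
     (\<exists>K::real. \<forall>z. Limsup (at_right 0) (\<lambda>r. ereal (qc_dilatation h z r)) \<le> ereal K)"

definition quasicircle :: "complex set \<Rightarrow> bool" where
  "quasicircle \<Gamma> \<longleftrightarrow> (\<exists>h. quasiconformal h \<and> \<Gamma> = h ` sphere 0 1)"

definition Crit :: "(complex \<Rightarrow> complex) \<Rightarrow> complex set \<Rightarrow> complex set" where
  "Crit f U = {z \<in> U. deriv f z = 0}"

definition filled :: "(complex \<Rightarrow> complex) \<Rightarrow> complex set \<Rightarrow> complex set" where
  "filled f U = {z \<in> U. \<forall>n. (f ^^ n) z \<in> U}"

definition preim :: "(complex \<Rightarrow> complex) \<Rightarrow> complex set \<Rightarrow> complex set \<Rightarrow> nat \<Rightarrow> complex set" where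
  "preim f U V n = {z. (\<forall>j<n. (f ^^ j) z \<in> U) \<and> (f ^^ n) z \<in> V}"

definition piece :: "(complex \<Rightarrow> complex) \<Rightarrow> complex set \<Rightarrow> complex set \<Rightarrow> nat \<Rightarrow> complex \<Rightarrow> complex set" where
  "piece f U V n x = connected_component_set (preim f U V n) x"

definition acc :: "(complex \<Rightarrow> complex) \<Rightarrow> complex set \<Rightarrow> complex set \<Rightarrow> complex \<Rightarrow> complex \<Rightarrow> bool" where
  "acc f U V x y \<longleftrightarrow> (\<forall>n. \<exists>j\<ge>1. (f ^^ j) x \<in> piece f U V n y)"

definition crit_rel :: "(complex \<Rightarrow> complex) \<Rightarrow> complex set \<Rightarrow> complex set \<Rightarrow> (complex \<times> complex) set" where
  "crit_rel f U V = {(c1, c2). c1 \<in> Crit f U \<and> c2 \<in> Crit f U \<and>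
                        (c1 = c2 \<or> (acc f U V c1 c2 \<and> acc f U V c2 c1))}"

definition classes :: "(complex \<Rightarrow> complex) \<Rightarrow> complex set \<Rightarrow> complex set \<Rightarrow> complex set set" where
  "classes f U V = Crit f U // crit_rel f U V"

definition class_acc :: "(complex \<Rightarrow> complex) \<Rightarrow> complex set \<Rightarrow> complex set \<Rightarrow> complex set \<Rightarrow> complex set \<Rightarrow> bool" where
  "class_acc f U V C1 C2 \<longleftrightarrow> (\<exists>c1\<in>C1. \<exists>c2\<in>C2. acc f U V c1 c2)"

definition class_le :: "(complex \<Rightarrow> complex) \<Rightarrow> complex set \<Rightarrow> complex set \<Rightarrow> complex set \<Rightarrow> complex set \<Rightarrow> bool" where
  "class_le f U V C1 C2 \<longleftrightarrow> C1 = C2 \<or> class_acc f U V C2 C1"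

definition layer0 :: "(complex \<Rightarrow> complex) \<Rightarrow> complex set \<Rightarrow> complex set \<Rightarrow> complex set set" where
  "layer0 f U V = {C \<in> classes f U V. \<not> (\<exists>C'\<in>classes f U V - {C}. class_acc f U V C C')}"

definition minimal_classes :: "(complex \<Rightarrow> complex) \<Rightarrow> complex set \<Rightarrow> complex set \<Rightarrow> complex set set \<Rightarrow> complex set set" where
  "minimal_classes f U V R = {C \<in> R. \<forall>C'\<in>R. class_le f U V C' C \<longrightarrow> C' = C}"

primrec layers_upto :: "(complex \<Rightarrow> complex) \<Rightarrow> complex set \<Rightarrow> complex set \<Rightarrow> nat \<Rightarrow> complex set set" where
  "layers_upto f U V 0 = layer0 f U V"
| "layers_upto f U V (Suc k) =
     layers_upto f U V k \<union> minimal_classes f U V (classes f U V - layers_upto f U V k)"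

fun layer :: "(complex \<Rightarrow> complex) \<Rightarrow> complex set \<Rightarrow> complex set \<Rightarrow> nat \<Rightarrow> complex set set" where
  "layer f U V 0 = layer0 f U V"
| "layer f U V (Suc k) = minimal_classes f U V (classes f U V - layers_upto f U V k)"

definition dyn_setup :: "(complex \<Rightarrow> complex) \<Rightarrow> complex set \<Rightarrow> complex set \<Rightarrow> bool" where
  "dyn_setup f U V \<longleftrightarrow>
     (\<exists>\<V>. finite \<V> \<and> V = \<Union>\<V> \<and> (\<forall>D\<in>\<V>. jordan_domain D \<and> quasicircle (frontier D)) \<and>
          pairwise disjnt \<V> \<and> pairwise (\<lambda>D E. disjnt (frontier D) (frontier E)) \<V>) \<and>
     (\<exists>\<U>. finite \<U> \<and> U = \<Union>\<U> \<and> (\<forall>D\<in>\<U>. jordan_domain D) \<and>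
          pairwise (\<lambda>D E. disjnt (closure D) (closure E)) \<U>) \<and>
     compact (closure U) \<and> closure U \<subseteq> V \<and>
     f holomorphic_on U \<and> f ` U \<subseteq> V \<and>
     (\<forall>K. compact K \<and> K \<subseteq> V \<longrightarrow> compact {z \<in> U. f z \<in> K}) \<and>
     Crit f U \<subseteq> filled f U \<and>
     (\<forall>D\<in>components V. \<forall>C1\<in>components (filled f U). \<forall>C2\<in>components (filled f U).
        C1 \<subseteq> D \<and> C1 \<inter> Crit f U \<noteq> {} \<and> C2 \<subseteq> D \<and> C2 \<inter> Crit f U \<noteq> {} \<longrightarrow> C1 = C2)"

end

theory Submission
  imports Defs
begin

text \<open>Accumulation is transitive because the iterate \<open>f\<^sup>i\<close>, being continuous, maps each
  connected puzzle piece of depth \<open>n + i\<close> into a puzzle piece of depth \<open>n\<close>.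
  Hence, by minimality, a class of layer \<open>k + 1\<close> accumulates to a class of a strictly lower
  layer, and chaining these steps down to layer \<open>0\<close> gives the result.\<close>

lemma continuous_on_funpow:
  assumes "continuous_on U f"
  shows "continuous_on {z. \<forall>m<i. (f ^^ m) z \<in> U} (f ^^ i)"
proof (induction i)
  case 0
  then show ?case by (simp add: continuous_on_id)
next
  case (Suc i)
  let ?S = "{z. \<forall>m<Suc i. (f ^^ m) z \<in> U}"
  have "continuous_on ?S (f ^^ i)"
    by (rule continuous_on_subset[OF Suc]) auto
  moreover have "(f ^^ i) ` ?S \<subseteq> U" by auto
  ultimately have "continuous_on ?S (f \<circ> (f ^^ i))"
    using continuous_on_compose continuous_on_subset[OF assms] by blast
  then show ?case by simp
qed

lemma funpow_image_preim_subset: "(f ^^ i) ` preim f U V (n + i) \<subseteq> preim f U V n"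
proof
  fix w assume "w \<in> (f ^^ i) ` preim f U V (n + i)"
  then obtain z where z: "z \<in> preim f U V (n + i)" and w: "w = (f ^^ i) z" by auto
  have "\<And>m. (f ^^ m) w = (f ^^ (m + i)) z" using w by (simp add: funpow_add)
  then show "w \<in> preim f U V n" using z unfolding preim_def by simp
qed

lemma funpow_image_piece_subset:
  assumes "continuous_on U f"
  shows "(f ^^ i) ` piece f U V (n + i) y \<subseteq> piece f U V n ((f ^^ i) y)"
proof (cases "y \<in> preim f U V (n + i)")
  case True
  let ?P = "piece f U V (n + i) y"
  have P_sub: "?P \<subseteq> preim f U V (n + i)"
    unfolding piece_def by (rule connected_component_subset)
  then have "?P \<subseteq> {z. \<forall>m<i. (f ^^ m) z \<in> U}" unfolding preim_def by auto
  then have "continuous_on ?P (f ^^ i)"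
    by (rule continuous_on_subset[OF continuous_on_funpow[OF assms]])
  then have "connected ((f ^^ i) ` ?P)"
    by (rule connected_continuous_image) (simp add: piece_def)
  moreover have "(f ^^ i) y \<in> (f ^^ i) ` ?P"
    using True by (simp add: piece_def)
  moreover have "(f ^^ i) ` ?P \<subseteq> preim f U V n"
    using P_sub funpow_image_preim_subset by blast
  ultimately show ?thesis
    unfolding piece_def by (intro connected_component_maximal)
next
  case False
  then have "piece f U V (n + i) y = {}" unfolding piece_def by (rule iffD2[OF connected_component_eq_empty])
  then show ?thesis by simp
qed

lemma acc_trans:
  assumes "continuous_on U f" and "acc f U V x y" and "acc f U V y z"
  shows "acc f U V x z"
  unfolding acc_def
proof
  fix n
  obtain i where i: "i \<ge> 1" "(f ^^ i) y \<in> piece f U V n z"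
    using assms(3) unfolding acc_def by blast
  obtain j where j: "j \<ge> 1" "(f ^^ j) x \<in> piece f U V (n + i) y"
    using assms(2) unfolding acc_def by blast
  have "(f ^^ i) ((f ^^ j) x) \<in> piece f U V n ((f ^^ i) y)"
    using funpow_image_piece_subset[OF assms(1)] j(2) by blast
  also have "piece f U V n ((f ^^ i) y) = piece f U V n z"
    using i(2) unfolding piece_def by (rule connected_component_eq)
  finally have "(f ^^ (i + j)) x \<in> piece f U V n z" by (simp add: funpow_add)
  then show "\<exists>j\<ge>1. (f ^^ j) x \<in> piece f U V n z" using i(1) by (intro exI[of _ "i + j"]) auto
qed

lemma class_acc_trans:
  assumes "continuous_on U f" and "C' \<in> classes f U V"
    and "class_acc f U V C C'" and "class_acc f U V C' C''"
  shows "class_acc f U V C C''"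
proof -
  note trans = acc_trans[OF assms(1)]
  obtain c c' where c: "c \<in> C" "c' \<in> C'" "acc f U V c c'"
    using assms(3) unfolding class_acc_def by blast
  obtain d' d'' where d: "d' \<in> C'" "d'' \<in> C''" "acc f U V d' d''"
    using assms(4) unfolding class_acc_def by blast
  obtain a where "C' = crit_rel f U V `` {a}"
    using assms(2) unfolding classes_def quotient_def by blast
  then have "(a, c') \<in> crit_rel f U V" "(a, d') \<in> crit_rel f U V" using c d by auto
  then have "c' = d' \<or> acc f U V c' d'"
    using trans unfolding crit_rel_def by auto
  then have "acc f U V c d''" using c d trans by blast
  then show ?thesis using c d unfolding class_acc_def by blast
qed

lemma layer0_subset_layers_upto: "layer0 f U V \<subseteq> layers_upto f U V k"
  by (induction k) auto

lemma layers_upto_imp_layer: "C \<in> layers_upto f U V k \<Longrightarrow> \<exists>j\<le>k. C \<in> layer f U V j"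
  by (induction k) (auto intro: le_SucI)

lemma layer_Suc_acc_lower_layer:
  assumes "C \<in> layer f U V (Suc k)"
  shows "\<exists>j\<le>k. \<exists>C'\<in>layer f U V j. C' \<in> classes f U V \<and> class_acc f U V C C'"
proof -
  have min: "C \<in> minimal_classes f U V (classes f U V - layers_upto f U V k)"
    using assms by simp
  then have "C \<in> classes f U V" "C \<notin> layer0 f U V"
    using layer0_subset_layers_upto unfolding minimal_classes_def by blast+
  then obtain C' where C': "C' \<in> classes f U V" "C' \<noteq> C" "class_acc f U V C C'"
    unfolding layer0_def by blast
  have "class_le f U V C' C" using C'(3) unfolding class_le_def by blast
  then have "C' \<in> layers_upto f U V k"
    using min C'(1,2) unfolding minimal_classes_def by blast
  then show ?thesis using layers_upto_imp_layer C' by blast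
qed

lemma layer_acc_layer0:
  assumes "continuous_on U f" and "k \<ge> 1" and "C \<in> layer f U V k"
  shows "\<exists>C0\<in>layer f U V 0. class_acc f U V C C0"
  using assms(2,3)
proof (induction k arbitrary: C rule: less_induct)
  case (less k)
  then obtain k' where k: "k = Suc k'" by (cases k) auto
  then obtain j C' where
    "j \<le> k'" "C' \<in> layer f U V j" "C' \<in> classes f U V" "class_acc f U V C C'"
    using layer_Suc_acc_lower_layer less.prems(2) by blast
  moreover have "C' \<in> layer f U V 0 \<or> (\<exists>C0\<in>layer f U V 0. class_acc f U V C' C0)"
  proof (cases "j = 0")
    case False
    then show ?thesis using less.IH[of j C'] calculation k by simp
  qed (use calculation in simp)
  ultimately show ?case using class_acc_trans[OF assms(1)] by blast
qed

theorem corollary7p2: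
  fixes f :: "complex \<Rightarrow> complex" and U V :: "complex set"
  assumes "dyn_setup f U V"
  shows "\<forall>k\<ge>1. \<forall>C\<in>layer f U V k. \<exists>C0\<in>layer f U V 0. class_acc f U V C C0"
proof -
  have "f holomorphic_on U" using assms unfolding dyn_setup_def by blast
  then have "continuous_on U f" by (rule holomorphic_on_imp_continuous_on)
  then show ?thesis using layer_acc_layer0 by blast
qed

end
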